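(* Let $1\le k\le n$, let $A\in\mathbb{R}^{n\times n}$, and consider $f(Q)=\langle A,Q\rangle=\operatorname{tr}(A^{\mathsf T}Q)$ on $\mathrm{Gr}(k,n)=\{Q\in\mathrm{O}(n): Q^{\mathsf T}=Q,\ \operatorname{tr}(Q)=2k-n\}$, equipped with the Riemannian metric $\langle X,Y\rangle_Q=\operatorname{tr}(XY)$ on tangent spaces. Then the Riemannian gradient of $f$ is \[ \nabla f(Q)=\tfrac14\big(A+A^{\mathsf T}-QAQ-QA^{\mathsf T}Q\big). \] Let $(A+A^{\mathsf T})/2=U\Lambda U^{\mathsf T}$ be an eigendecomposition with $U\in\mathrm{O}(n)$, $\Lambda=\operatorname{diag}(\lambda_1,\dots,\lambda_n)$, $\lambda_1\ge\cdots\ge\lambda_n$. Then $Q^*=UI_{k,n-k}U^{\mathsf T}$ is a maximizer of $f$ over $\mathrm{Gr}(k,n)$, and for every $Q\in\mathrm{Gr}(k,n)$, \[ 2\|\Lambda\|\,(f(Q^* )-f(Q))\ \ge\ \|\nabla f(Q)\|^2 . \]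
   Context: $I_{k,n-k}=\operatorname{diag}(I_k,-I_{n-k})$. The tangent space of $\mathrm{Gr}(k,n)$ at $Q$ is $\{X\in\mathbb{R}^{n\times n}:X^{\mathsf T}=X,\ XQ+QX=0\}$. $\|\nabla f(Q)\|$ is the Frobenius norm and $\|\Lambda\|$ is the spectral (operator) norm of $\Lambda$. *)

theory Defs
  imports "HOL-Analysis.Analysis" "Jordan_Normal_Form.Matrix"
begin

definition mtrace :: "real mat \<Rightarrow> real" where
  "mtrace M = (\<Sum>i<dim_row M. M $$ (i,i))"

definition frob_norm :: "real mat \<Rightarrow> real" where
  "frob_norm M = sqrt (\<Sum>i<dim_row M. \<Sum>j<dim_col M. (M $$ (i,j))\<^sup>2)"

definition vnorm :: "real vec \<Rightarrow> real" where
  "vnorm v = sqrt (\<Sum>i<dim_vec v. (v $ i)\<^sup>2)"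

definition op_norm :: "real mat \<Rightarrow> real" where
  "op_norm M = Sup {vnorm (M *\<^sub>v v) | v. v \<in> carrier_vec (dim_col M) \<and> vnorm v \<le> 1}"

definition orth_group :: "nat \<Rightarrow> real mat set" where
  "orth_group n = {Q \<in> carrier_mat n n. transpose_mat Q * Q = 1\<^sub>m n}"

definition grassmann :: "nat \<Rightarrow> nat \<Rightarrow> real mat set" where
  "grassmann k n = {Q \<in> orth_group n. transpose_mat Q = Q \<and> mtrace Q = 2 * real k - real n}"

definition tangent_space :: "nat \<Rightarrow> real mat \<Rightarrow> real mat set" where
  "tangent_space n Q = {X \<in> carrier_mat n n. transpose_mat X = X \<and> X * Q + Q * X = 0\<^sub>m n n}"

definition Ikn :: "nat \<Rightarrow> nat \<Rightarrow> real mat" where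
  "Ikn k n = mat_diag n (\<lambda>i. if i < k then 1 else -1)"

definition riem_grad :: "nat \<Rightarrow> (real mat \<Rightarrow> real) \<Rightarrow> real mat \<Rightarrow> real mat" where
  "riem_grad n f Q = (THE G. G \<in> tangent_space n Q \<and>
     (\<forall>X \<in> tangent_space n Q.
        ((\<lambda>t. f (Q + t \<cdot>\<^sub>m X)) has_real_derivative mtrace (G * X)) (at 0)))"

end

theory Submission
  imports Defs "Jordan_Normal_Form.Determinant"
begin

(* Let S = (A + A^T)/2. For a symmetric involution Q, the matrix (S - QSQ)/2 is tangent at Q
   and has the same trace pairing as A^T with every tangent vector; since the trace form is
   definite on symmetric matrices it is the Riemannian gradient.
   For the bound, conjugate by U: P = U^T Q U is again a point of Gr(k,n), so its rows and
   columns are unit vectors and its trace is 2k - n. Writing e_i = +1 for i < k and -1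
   otherwise, f(Qs) - f(Q) = sum_i lam_i (e_i - P_ii) and |grad f(Q)|^2 = 1/4 sum_ij
   ((lam_i - lam_j) P_ij)^2. Shifting by the threshold c = lam_(k-1) (indices from 0, using the trace) turns
   the gap into sum_i |lam_i - c| (1 - e_i P_ii) >= 0, and the estimate
   (lam_i - lam_j)^2 <= 2 |Lambda| (|lam_i - c| + |lam_j - c|) together with the unit row and
   column sums of P_ij^2 bounds the gradient by 2 |Lambda| times the gap. *)

section \<open>Traces and the Frobenius norm\<close>

lemma mtrace_mult_comm:
  assumes "A \<in> carrier_mat n m" and "B \<in> carrier_mat m n"
  shows "mtrace (A * B) = mtrace (B * A)"
proof -
  have "mtrace (A * B) = (\<Sum>i<n. \<Sum>j<m. A $$ (i, j) * B $$ (j, i))"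
    using assms unfolding mtrace_def by (simp add: scalar_prod_def atLeast0LessThan)
  also have "\<dots> = (\<Sum>j<m. \<Sum>i<n. B $$ (j, i) * A $$ (i, j))"
    by (subst sum.swap) (simp add: mult.commute)
  also have "\<dots> = mtrace (B * A)"
    using assms unfolding mtrace_def by (simp add: scalar_prod_def atLeast0LessThan)
  finally show ?thesis .
qed

lemma mtrace_add: "A \<in> carrier_mat n n \<Longrightarrow> B \<in> carrier_mat n n \<Longrightarrow> mtrace (A + B) = mtrace A + mtrace B"
  unfolding mtrace_def by (simp add: sum.distrib)

lemma mtrace_diff: "A \<in> carrier_mat n n \<Longrightarrow> B \<in> carrier_mat n n \<Longrightarrow> mtrace (A - B) = mtrace A - mtrace B"
  unfolding mtrace_def by (simp add: sum_subtractf)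

lemma mtrace_smult: "A \<in> carrier_mat n n \<Longrightarrow> mtrace (c \<cdot>\<^sub>m A) = c * mtrace A"
  unfolding mtrace_def by (simp add: sum_distrib_left)

lemma mtrace_transpose: "A \<in> carrier_mat n n \<Longrightarrow> mtrace (transpose_mat A) = mtrace A"
  unfolding mtrace_def by simp

lemma mtrace_mat_diag_mult:
  assumes "M \<in> carrier_mat n n"
  shows "mtrace (mat_diag n d * M) = (\<Sum>i<n. d i * M $$ (i, i))"
  unfolding mtrace_def mat_diag_mult_left[OF assms] by simp

lemma frob_norm_eq_sqrt_mtrace: "frob_norm M = sqrt (mtrace (transpose_mat M * M))"
proof -
  have "mtrace (transpose_mat M * M) = (\<Sum>j<dim_col M. \<Sum>i<dim_row M. M $$ (i, j) * M $$ (i, j))"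
    unfolding mtrace_def by (simp add: scalar_prod_def atLeast0LessThan)
  also have "\<dots> = (\<Sum>i<dim_row M. \<Sum>j<dim_col M. (M $$ (i, j))\<^sup>2)"
    by (subst sum.swap) (simp add: power2_eq_square)
  finally show ?thesis unfolding frob_norm_def by simp
qed

lemma frob_norm_smult: "frob_norm (c \<cdot>\<^sub>m M) = \<bar>c\<bar> * frob_norm M"
proof -
  have "(\<Sum>i<dim_row M. \<Sum>j<dim_col M. ((c \<cdot>\<^sub>m M) $$ (i, j))\<^sup>2)
      = c\<^sup>2 * (\<Sum>i<dim_row M. \<Sum>j<dim_col M. (M $$ (i, j))\<^sup>2)"
    by (simp add: power_mult_distrib sum_distrib_left)
  then show ?thesis
    unfolding frob_norm_def by (simp add: real_sqrt_mult)
qed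

lemma mat_eq_0_if_frob_norm_eq_0:
  assumes "M \<in> carrier_mat n m" and "frob_norm M = 0"
  shows "M = 0\<^sub>m n m"
proof (rule eq_matI)
  fix i j assume ij: "i < dim_row (0\<^sub>m n m :: real mat)" "j < dim_col (0\<^sub>m n m :: real mat)"
  have "(\<Sum>i<n. \<Sum>j<m. (M $$ (i, j))\<^sup>2) = 0"
    using assms unfolding frob_norm_def by simp
  then have "(M $$ (i, j))\<^sup>2 = 0"
    using ij by (simp add: sum_nonneg sum_nonneg_eq_0_iff)
  then show "M $$ (i, j) = 0\<^sub>m n m $$ (i, j)" using ij by simp
qed (use assms in auto)

section \<open>The orthogonal group and the Grassmannian\<close>

lemma orth_groupD:
  assumes "U \<in> orth_group n"
  shows "U \<in> carrier_mat n n" and "transpose_mat U * U = 1\<^sub>m n" and "U * transpose_mat U = 1\<^sub>m n"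
proof -
  show U: "U \<in> carrier_mat n n" and UU: "transpose_mat U * U = 1\<^sub>m n"
    using assms unfolding orth_group_def by auto
  show "U * transpose_mat U = 1\<^sub>m n"
  proof (rule mat_mult_left_right_inverse)
    show "transpose_mat U \<in> carrier_mat n n" using U by simp
  qed (fact U UU)+
qed

lemma transpose_orth_group:
  assumes "U \<in> orth_group n"
  shows "transpose_mat U \<in> orth_group n"
  using orth_groupD[OF assms] unfolding orth_group_def by simp

lemma orth_mult_cancel_left:
  assumes "U \<in> orth_group n" and "M \<in> carrier_mat n m"
  shows "transpose_mat U * (U * M) = M" and "U * (transpose_mat U * M) = M"
proof -
  note U = orth_groupD[OF assms(1)]
  have "transpose_mat U * (U * M) = (transpose_mat U * U) * M"
    using U(1) assms(2) by (intro assoc_mult_mat[symmetric]) auto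
  then show "transpose_mat U * (U * M) = M"
    using U(2) assms(2) by simp
  have "U * (transpose_mat U * M) = (U * transpose_mat U) * M"
    using U(1) assms(2) by (intro assoc_mult_mat[symmetric]) auto
  then show "U * (transpose_mat U * M) = M"
    using U(3) assms(2) by simp
qed

lemma frob_norm_orth_mult:
  assumes "U \<in> orth_group n" and "M \<in> carrier_mat n m"
  shows "frob_norm (U * M) = frob_norm M"
proof -
  have U: "U \<in> carrier_mat n n" using orth_groupD(1)[OF assms(1)] .
  have "transpose_mat (U * M) * (U * M) = transpose_mat M * transpose_mat U * (U * M)"
    using U assms(2) by (simp add: transpose_mult)
  also have "\<dots> = transpose_mat M * (transpose_mat U * (U * M))"
    using U assms(2) by (intro assoc_mult_mat[of _ m n _ n _ m]) auto
  finally show ?thesis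
    using orth_mult_cancel_left(1)[OF assms] by (simp add: frob_norm_eq_sqrt_mtrace)
qed

lemma frob_norm_mult_orth:
  assumes "U \<in> orth_group n" and "M \<in> carrier_mat m n"
  shows "frob_norm (M * U) = frob_norm M"
proof -
  note U = orth_groupD[OF assms(1)]
  define N where "N = transpose_mat M * M"
  have N: "N \<in> carrier_mat n n" using assms(2) by (simp add: N_def)
  have "transpose_mat (M * U) * (M * U) = transpose_mat U * transpose_mat M * (M * U)"
    using U(1) assms(2) by (simp add: transpose_mult)
  also have "\<dots> = transpose_mat U * (N * U)"
    using U(1) assms(2) by (simp add: N_def assoc_mult_mat[of _ n n _ m _ n])
  finally have "mtrace (transpose_mat (M * U) * (M * U)) = mtrace (N * U * transpose_mat U)"
    using U(1) N mtrace_mult_comm[of "transpose_mat U" n n "N * U"] by simp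
  also have "N * U * transpose_mat U = N"
    using U N by simp
  finally show ?thesis by (simp add: frob_norm_eq_sqrt_mtrace N_def)
qed

lemma orth_group_rows_sq:
  assumes "U \<in> orth_group n" and "i < n"
  shows "(\<Sum>j<n. (U $$ (i, j))\<^sup>2) = 1"
proof -
  have "(U * transpose_mat U) $$ (i, i) = 1"
    using orth_groupD(3)[OF assms(1)] assms(2) by simp
  then show ?thesis
    using orth_groupD(1)[OF assms(1)] assms(2)
    by (simp add: scalar_prod_def atLeast0LessThan power2_eq_square)
qed

lemma orth_group_cols_sq:
  assumes "U \<in> orth_group n" and "j < n"
  shows "(\<Sum>i<n. (U $$ (i, j))\<^sup>2) = 1"
  using orth_group_rows_sq[OF transpose_orth_group[OF assms(1)] assms(2)]
    orth_groupD(1)[OF assms(1)] assms(2) by simp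

lemma mtrace_orth_conj:
  assumes "U \<in> orth_group n" and "M \<in> carrier_mat n n"
  shows "mtrace (U * M * transpose_mat U) = mtrace M"
proof -
  have "mtrace (U * M * transpose_mat U) = mtrace (transpose_mat U * (U * M))"
    using orth_groupD(1)[OF assms(1)] assms(2) by (intro mtrace_mult_comm[of _ n n]) auto
  then show ?thesis
    using orth_mult_cancel_left(1)[OF assms] by simp
qed

lemma orth_conj_mult:
  assumes "U \<in> orth_group n" and "M \<in> carrier_mat n n" and "N \<in> carrier_mat n n"
  shows "(U * M * transpose_mat U) * (U * N * transpose_mat U) = U * (M * N) * transpose_mat U"
proof -
  have U: "U \<in> carrier_mat n n" using orth_groupD(1)[OF assms(1)] .
  have "(U * M * transpose_mat U) * (U * N * transpose_mat U)
      = U * (M * (transpose_mat U * (U * (N * transpose_mat U))))"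
    using U assms(2,3) by (simp add: assoc_mult_mat[of _ n n _ n _ n])
  also have "transpose_mat U * (U * (N * transpose_mat U)) = N * transpose_mat U"
    using orth_mult_cancel_left(1)[OF assms(1), of "N * transpose_mat U" n] U assms(3) by simp
  finally show ?thesis
    using U assms(2,3) by (simp add: assoc_mult_mat[of _ n n _ n _ n])
qed

lemma conj_diff_distrib:
  fixes U M N :: "real mat"
  assumes "U \<in> carrier_mat n n" and "M \<in> carrier_mat n n" and "N \<in> carrier_mat n n"
  shows "U * (M - N) * transpose_mat U = U * M * transpose_mat U - U * N * transpose_mat U"
proof -
  have "U * (M - N) = U * M - U * N"
    using mult_minus_distrib_mat[OF assms] .
  then show ?thesis
    using assms by (simp add: minus_mult_distrib_mat[of _ n n])
qed

lemma orth_conj_transpose_conj: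
  assumes "U \<in> orth_group n" and "M \<in> carrier_mat n n"
  shows "U * (transpose_mat U * M * U) * transpose_mat U = M"
proof -
  have U: "U \<in> carrier_mat n n" using orth_groupD(1)[OF assms(1)] .
  have "U * (transpose_mat U * M * U) * transpose_mat U = U * (transpose_mat U * (M * U * transpose_mat U))"
    using U assms(2) by (simp add: assoc_mult_mat[of _ n n _ n _ n])
  also have "\<dots> = M * U * transpose_mat U"
    using orth_mult_cancel_left(2)[OF assms(1), of "M * U * transpose_mat U" n] U assms(2) by simp
  also have "\<dots> = M"
    using orth_groupD(3)[OF assms(1)] U assms(2) by simp
  finally show ?thesis .
qed

lemma grassmannI:
  assumes "Q \<in> carrier_mat n n" and "transpose_mat Q = Q" and "Q * Q = 1\<^sub>m n"
    and "mtrace Q = 2 * real k - real n"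
  shows "Q \<in> grassmann k n"
  using assms unfolding grassmann_def orth_group_def by simp

lemma grassmannD:
  assumes "Q \<in> grassmann k n"
  shows "Q \<in> orth_group n" and "Q \<in> carrier_mat n n" and "transpose_mat Q = Q"
    and "Q * Q = 1\<^sub>m n" and "mtrace Q = 2 * real k - real n"
proof -
  show Q: "Q \<in> orth_group n" and QT: "transpose_mat Q = Q" and "mtrace Q = 2 * real k - real n"
    using assms unfolding grassmann_def by auto
  show "Q \<in> carrier_mat n n" using orth_groupD(1)[OF Q] .
  show "Q * Q = 1\<^sub>m n" using orth_groupD(2)[OF Q] QT by simp
qed

lemma orth_conj_grassmann:
  assumes "U \<in> orth_group n" and "Q \<in> grassmann k n"
  shows "U * Q * transpose_mat U \<in> grassmann k n"
proof (rule grassmannI)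
  have U: "U \<in> carrier_mat n n" using orth_groupD(1)[OF assms(1)] .
  note Q = grassmannD[OF assms(2)]
  show "U * Q * transpose_mat U \<in> carrier_mat n n" using U Q(2) by simp
  have "transpose_mat (U * Q * transpose_mat U) = transpose_mat (transpose_mat U) * transpose_mat (U * Q)"
    by (rule transpose_mult) (use U Q(2) in auto)
  also have "\<dots> = U * Q * transpose_mat U"
    using U Q(2,3) by (simp add: transpose_mult[OF U Q(2)])
  finally show "transpose_mat (U * Q * transpose_mat U) = U * Q * transpose_mat U" .
  have "U * Q * transpose_mat U * (U * Q * transpose_mat U) = U * 1\<^sub>m n * transpose_mat U"
    using orth_conj_mult[OF assms(1) Q(2) Q(2)] Q(4) by simp
  also have "\<dots> = 1\<^sub>m n"
    using U orth_groupD(3)[OF assms(1)] by simp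
  finally show "U * Q * transpose_mat U * (U * Q * transpose_mat U) = 1\<^sub>m n" .
  show "mtrace (U * Q * transpose_mat U) = 2 * real k - real n"
    using mtrace_orth_conj[OF assms(1) Q(2)] Q(5) by simp
qed

lemma sum_signs:
  assumes "k \<le> n"
  shows "(\<Sum>i<n. if i < k then 1 else -1 :: real) = 2 * real k - real n"
proof -
  have split: "{..<n} = {..<k} \<union> {k..<n}" using assms by auto
  have "(\<Sum>i<n. if i < k then 1 else -1 :: real)
      = (\<Sum>i<k. if i < k then 1 else -1 :: real) + (\<Sum>i=k..<n. if i < k then 1 else -1 :: real)"
    unfolding split by (rule sum.union_disjoint) auto
  also have "(\<Sum>i<k. if i < k then 1 else -1 :: real) = real k"
    by simp
  also have "(\<Sum>i=k..<n. if i < k then 1 else -1 :: real) = - real (n - k)"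
    by simp
  finally show ?thesis
    using assms by (simp add: of_nat_diff)
qed

lemma Ikn_grassmann:
  assumes "k \<le> n"
  shows "Ikn k n \<in> grassmann k n"
proof (rule grassmannI)
  show "Ikn k n \<in> carrier_mat n n" by (simp add: Ikn_def)
  show "transpose_mat (Ikn k n) = Ikn k n"
    unfolding Ikn_def mat_diag_def by (rule eq_matI) auto
  have "(\<lambda>i. (if i < k then 1 else -1) * (if i < k then 1 else -1 :: real)) = (\<lambda>i. 1)"
    by auto
  then show "Ikn k n * Ikn k n = 1\<^sub>m n"
    unfolding Ikn_def mat_diag_diag by simp
  show "mtrace (Ikn k n) = 2 * real k - real n"
    using sum_signs[OF assms] unfolding Ikn_def mtrace_def mat_diag_def by simp
qed

section \<open>The Riemannian gradient of a linear function\<close>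

lemma tangent_space_diff:
  assumes Q: "Q \<in> carrier_mat n n" and X: "X \<in> tangent_space n Q" and Y: "Y \<in> tangent_space n Q"
  shows "X - Y \<in> tangent_space n Q"
proof -
  have Xc: "X \<in> carrier_mat n n" and XT: "transpose_mat X = X" and XQ: "X * Q + Q * X = 0\<^sub>m n n"
    using X unfolding tangent_space_def by auto
  have Yc: "Y \<in> carrier_mat n n" and YT: "transpose_mat Y = Y" and YQ: "Y * Q + Q * Y = 0\<^sub>m n n"
    using Y unfolding tangent_space_def by auto
  have "(X - Y) * Q + Q * (X - Y) = (X * Q - Y * Q) + (Q * X - Q * Y)"
    using minus_mult_distrib_mat[OF Xc Yc Q] mult_minus_distrib_mat[OF Q Xc Yc] by simp
  also have "\<dots> = (X * Q + Q * X) - (Y * Q + Q * Y)"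
    by (rule eq_matI) (use Xc Yc Q in auto)
  finally have "(X - Y) * Q + Q * (X - Y) = 0\<^sub>m n n"
    unfolding XQ YQ by simp
  moreover have "transpose_mat (X - Y) = X - Y"
    using transpose_minus[OF Xc Yc] XT YT by simp
  ultimately show ?thesis
    using minus_carrier_mat[OF Yc] unfolding tangent_space_def by simp
qed

lemma sym_mat_eq_0_if_mtrace_sq:
  assumes "D \<in> carrier_mat n n" and "transpose_mat D = D" and "mtrace (D * D) = 0"
  shows "D = 0\<^sub>m n n"
proof (rule mat_eq_0_if_frob_norm_eq_0[OF assms(1)])
  show "frob_norm D = 0"
    using assms(2,3) by (simp add: frob_norm_eq_sqrt_mtrace)
qed

lemma riem_grad_eqI:
  assumes Q: "Q \<in> carrier_mat n n" and G: "G \<in> tangent_space n Q"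
    and deriv: "\<And>X. X \<in> tangent_space n Q \<Longrightarrow>
      ((\<lambda>t. f (Q + t \<cdot>\<^sub>m X)) has_real_derivative mtrace (G * X)) (at 0)"
  shows "riem_grad n f Q = G"
  unfolding riem_grad_def
proof (rule the_equality)
  show "G \<in> tangent_space n Q \<and> (\<forall>X \<in> tangent_space n Q.
      ((\<lambda>t. f (Q + t \<cdot>\<^sub>m X)) has_real_derivative mtrace (G * X)) (at 0))"
    using G deriv by blast
  fix G' assume G': "G' \<in> tangent_space n Q \<and> (\<forall>X \<in> tangent_space n Q.
      ((\<lambda>t. f (Q + t \<cdot>\<^sub>m X)) has_real_derivative mtrace (G' * X)) (at 0))"
  have Gc: "G \<in> carrier_mat n n" and G'c: "G' \<in> carrier_mat n n"
    using G G' unfolding tangent_space_def by auto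
  define D where "D = G' - G"
  have D: "D \<in> tangent_space n Q"
    unfolding D_def using tangent_space_diff[OF Q] G G' by blast
  then have Dc: "D \<in> carrier_mat n n" and DT: "transpose_mat D = D"
    unfolding tangent_space_def by auto
  have "mtrace (G' * D) = mtrace (G * D)"
    using G' deriv[OF D] D DERIV_unique by blast
  moreover have "D * D = G' * D - G * D"
    unfolding D_def using minus_mult_distrib_mat[OF G'c Gc Dc[unfolded D_def]] .
  ultimately have "mtrace (D * D) = 0"
    using G'c Gc Dc by (simp add: mtrace_diff[of _ n])
  then have D0: "D = 0\<^sub>m n n"
    using sym_mat_eq_0_if_mtrace_sq[OF Dc DT] by blast
  show "G' = G"
  proof (rule eq_matI)
    fix i j assume "i < dim_row G" and "j < dim_col G"
    then show "G' $$ (i, j) = G $$ (i, j)"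
      using arg_cong[OF D0, of "\<lambda>M. M $$ (i, j)"] Gc G'c by (simp add: D_def)
  qed (use Gc G'c in auto)
qed

lemma tangent_space_smult:
  assumes Q: "Q \<in> carrier_mat n n" and X: "X \<in> tangent_space n Q"
  shows "c \<cdot>\<^sub>m X \<in> tangent_space n Q"
proof -
  have Xc: "X \<in> carrier_mat n n" and XT: "transpose_mat X = X" and XQ: "X * Q + Q * X = 0\<^sub>m n n"
    using X unfolding tangent_space_def by auto
  have "(c \<cdot>\<^sub>m X) * Q + Q * (c \<cdot>\<^sub>m X) = c \<cdot>\<^sub>m (X * Q + Q * X)"
    using Xc Q add_smult_distrib_left_mat[of "X * Q" n n "Q * X" c]
    by (simp add: mult_smult_assoc_mat mult_smult_distrib)
  moreover have "transpose_mat (c \<cdot>\<^sub>m X) = c \<cdot>\<^sub>m transpose_mat X"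
    by (rule eq_matI) auto
  ultimately show ?thesis
    using Xc XQ XT unfolding tangent_space_def by simp
qed

lemma involution_mult_cancel_left:
  assumes "Q \<in> carrier_mat n n" and "Q * Q = 1\<^sub>m n" and "X \<in> carrier_mat n m"
  shows "Q * (Q * X) = (X :: real mat)"
proof -
  have "Q * (Q * X) = (Q * Q) * X"
    using assms by (intro assoc_mult_mat[symmetric]) auto
  then show ?thesis using assms(2,3) by simp
qed

lemma diff_conj_involution_mult:
  fixes Q M :: "real mat"
  assumes Q: "Q \<in> carrier_mat n n" and QQ: "Q * Q = 1\<^sub>m n" and M: "M \<in> carrier_mat n n"
  shows "(M - Q * M * Q) * Q = M * Q - Q * M"
proof -
  have "(M - Q * M * Q) * Q = M * Q - Q * M * Q * Q"
    by (rule minus_mult_distrib_mat) (use Q M in auto)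
  also have "Q * M * Q * Q = Q * M"
    using Q M QQ by (simp add: assoc_mult_mat[of _ n n _ n _ n])
  finally show ?thesis .
qed

lemma sym_diff_conj_tangent:
  assumes Q: "Q \<in> carrier_mat n n" and QT: "transpose_mat Q = Q" and QQ: "Q * Q = 1\<^sub>m n"
    and M: "M \<in> carrier_mat n n" and MT: "transpose_mat M = M"
  shows "M - Q * M * Q \<in> tangent_space n Q"
proof -
  have QMQ: "Q * M * Q \<in> carrier_mat n n" using Q M by simp
  have right: "(M - Q * M * Q) * Q = M * Q - Q * M"
    using diff_conj_involution_mult[OF Q QQ M] .
  have "Q * (M - Q * M * Q) = Q * M - Q * (Q * M * Q)"
    using mult_minus_distrib_mat[OF Q M QMQ] .
  also have "Q * (Q * M * Q) = M * Q"
    using involution_mult_cancel_left[OF Q QQ, of "M * Q" n] Q M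
    by (simp add: assoc_mult_mat[of _ n n _ n _ n])
  finally have left: "Q * (M - Q * M * Q) = Q * M - M * Q" .
  have "(M - Q * M * Q) * Q + Q * (M - Q * M * Q) = 0\<^sub>m n n"
    unfolding left right by (rule eq_matI) (use Q M in auto)
  moreover have "transpose_mat (M - Q * M * Q) = M - Q * M * Q"
  proof -
    have "transpose_mat (Q * M * Q) = transpose_mat Q * transpose_mat (Q * M)"
      by (rule transpose_mult) (use Q M in auto)
    also have "\<dots> = Q * M * Q"
      using Q M QT MT by (simp add: transpose_mult[OF Q M])
    finally show ?thesis
      using transpose_minus[OF M QMQ] MT by simp
  qed
  ultimately show ?thesis
    using minus_carrier_mat[OF QMQ] unfolding tangent_space_def by simp
qed

text \<open>For symmetric \<open>M\<close> this is the orthogonal projection of \<open>M\<close> onto \<open>tangent_space n Q\<close>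
  with respect to the trace inner product.\<close>
definition tangent_proj :: "real mat \<Rightarrow> real mat \<Rightarrow> real mat" where
  "tangent_proj Q M = (1/2) \<cdot>\<^sub>m (M - Q * M * Q)"

lemma tangent_proj_tangent:
  assumes "Q \<in> carrier_mat n n" and "transpose_mat Q = Q" and "Q * Q = 1\<^sub>m n"
    and "M \<in> carrier_mat n n" and "transpose_mat M = M"
  shows "tangent_proj Q M \<in> tangent_space n Q"
  unfolding tangent_proj_def
  using tangent_space_smult[OF assms(1) sym_diff_conj_tangent[OF assms]] .

lemma mtrace_tangent_proj_mult:
  assumes Q: "Q \<in> carrier_mat n n" and QQ: "Q * Q = 1\<^sub>m n"
    and M: "M \<in> carrier_mat n n" and X: "X \<in> tangent_space n Q"
  shows "mtrace (tangent_proj Q M * X) = mtrace (M * X)"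
proof -
  have Xc: "X \<in> carrier_mat n n" and XQ: "X * Q + Q * X = 0\<^sub>m n n"
    using X unfolding tangent_space_def by auto
  have "X + Q * X * Q = (X * Q + Q * X) * Q"
    using Q Xc QQ by (simp add: add_mult_distrib_mat[of _ n n] assoc_mult_mat[of _ n n _ n _ n])
  then have XQX: "X + Q * X * Q = 0\<^sub>m n n"
    using XQ Q by simp
  have "mtrace (Q * M * Q * X) = mtrace (Q * (M * Q * X))"
    using Q M Xc by (simp add: assoc_mult_mat[of _ n n _ n _ n])
  also have "\<dots> = mtrace (M * Q * X * Q)"
    using Q M Xc by (intro mtrace_mult_comm[of _ n n]) auto
  also have "\<dots> = mtrace (M * (Q * X * Q))"
    using Q M Xc by (simp add: assoc_mult_mat[of _ n n _ n _ n])
  also have "\<dots> = mtrace (M * (X + Q * X * Q)) - mtrace (M * X)"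
    using Q M Xc by (simp add: mult_add_distrib_mat[of _ n n] mtrace_add[of _ n])
  finally have QMQX: "mtrace (Q * M * Q * X) = - mtrace (M * X)"
    using M unfolding XQX by (simp add: mtrace_def)
  have MX: "M * X \<in> carrier_mat n n" and QMQX_carrier: "Q * M * Q * X \<in> carrier_mat n n"
    using Q M Xc by auto
  have "tangent_proj Q M * X = (1/2) \<cdot>\<^sub>m ((M - Q * M * Q) * X)"
    unfolding tangent_proj_def by (rule mult_smult_assoc_mat) (use Q M Xc in auto)
  also have "(M - Q * M * Q) * X = M * X - Q * M * Q * X"
    by (rule minus_mult_distrib_mat) (use Q M Xc in auto)
  finally have tp: "tangent_proj Q M * X = (1/2) \<cdot>\<^sub>m (M * X - Q * M * Q * X)" .
  have "mtrace (tangent_proj Q M * X) = (1/2) * (mtrace (M * X) - mtrace (Q * M * Q * X))"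
    unfolding tp mtrace_smult[OF minus_carrier_mat[OF QMQX_carrier]] mtrace_diff[OF MX QMQX_carrier] ..
  then show ?thesis
    unfolding QMQX by simp
qed

lemma mtrace_transpose_mult_sym:
  assumes A: "A \<in> carrier_mat n n" and X: "X \<in> carrier_mat n n" and XT: "transpose_mat X = X"
  shows "mtrace (transpose_mat A * X) = mtrace ((1/2) \<cdot>\<^sub>m (A + transpose_mat A) * X)"
proof -
  have "mtrace (transpose_mat A * X) = mtrace (transpose_mat (transpose_mat A * X))"
    using A X by (simp add: mtrace_transpose[of _ n])
  also have "transpose_mat (transpose_mat A * X) = X * A"
    using transpose_mult[of "transpose_mat A" n n X n] A X XT by simp
  also have "mtrace (X * A) = mtrace (A * X)"
    using mtrace_mult_comm[OF X A] .
  finally have AX: "mtrace (transpose_mat A * X) = mtrace (A * X)" .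
  have "(1/2) \<cdot>\<^sub>m (A + transpose_mat A) * X = (1/2) \<cdot>\<^sub>m ((A + transpose_mat A) * X)"
    by (rule mult_smult_assoc_mat) (use A X in auto)
  also have "(A + transpose_mat A) * X = A * X + transpose_mat A * X"
    by (rule add_mult_distrib_mat) (use A X in auto)
  finally have "mtrace ((1/2) \<cdot>\<^sub>m (A + transpose_mat A) * X)
      = (1/2) * (mtrace (A * X) + mtrace (transpose_mat A * X))"
    using A X by (simp add: mtrace_smult[of _ n] mtrace_add[of _ n])
  then show ?thesis
    unfolding AX by simp
qed

lemma riem_grad_mtrace:
  assumes A: "A \<in> carrier_mat n n" and Q: "Q \<in> carrier_mat n n"
    and QT: "transpose_mat Q = Q" and QQ: "Q * Q = 1\<^sub>m n"
  shows "riem_grad n (\<lambda>Q. mtrace (transpose_mat A * Q)) Q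
    = tangent_proj Q ((1/2) \<cdot>\<^sub>m (A + transpose_mat A))"
proof (rule riem_grad_eqI[OF Q])
  define S where "S = (1/2) \<cdot>\<^sub>m (A + transpose_mat A)"
  have S: "S \<in> carrier_mat n n" using A by (simp add: S_def)
  have ST: "transpose_mat S = S"
    unfolding S_def by (rule eq_matI) (use A in auto)
  show "tangent_proj Q S \<in> tangent_space n Q"
    using tangent_proj_tangent[OF Q QT QQ S ST] .
  fix X assume X: "X \<in> tangent_space n Q"
  then have Xc: "X \<in> carrier_mat n n" and XT: "transpose_mat X = X"
    unfolding tangent_space_def by auto
  have "transpose_mat A * (Q + t \<cdot>\<^sub>m X) = transpose_mat A * Q + t \<cdot>\<^sub>m (transpose_mat A * X)" for t
    using A Q Xc by (simp add: mult_add_distrib_mat[of _ n n] mult_smult_distrib[of _ n n])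
  then have "(\<lambda>t. mtrace (transpose_mat A * (Q + t \<cdot>\<^sub>m X)))
      = (\<lambda>t. mtrace (transpose_mat A * Q) + t * mtrace (transpose_mat A * X))"
    using A Q Xc by (simp add: mtrace_add[of _ n] mtrace_smult[of _ n])
  moreover have "mtrace (transpose_mat A * X) = mtrace (tangent_proj Q S * X)"
    using mtrace_transpose_mult_sym[OF A Xc XT] mtrace_tangent_proj_mult[OF Q QQ S X]
    by (simp add: S_def)
  moreover have "((\<lambda>t. c + t * d) has_real_derivative d) (at 0)" for c d :: real
    by (auto intro!: derivative_eq_intros)
  ultimately show "((\<lambda>t. mtrace (transpose_mat A * (Q + t \<cdot>\<^sub>m X)))
      has_real_derivative mtrace (tangent_proj Q S * X)) (at 0)"
    by metis
qed

lemma tangent_proj_sym_part: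
  assumes A: "A \<in> carrier_mat n n" and Q: "Q \<in> carrier_mat n n"
  shows "tangent_proj Q ((1/2) \<cdot>\<^sub>m (A + transpose_mat A))
    = (1/4) \<cdot>\<^sub>m (A + transpose_mat A - Q * A * Q - Q * transpose_mat A * Q)"
proof -
  have "Q * ((1/2) \<cdot>\<^sub>m (A + transpose_mat A)) = (1/2) \<cdot>\<^sub>m (Q * (A + transpose_mat A))"
    by (rule mult_smult_distrib) (use A Q in auto)
  also have "Q * (A + transpose_mat A) = Q * A + Q * transpose_mat A"
    by (rule mult_add_distrib_mat) (use A Q in auto)
  finally have "Q * ((1/2) \<cdot>\<^sub>m (A + transpose_mat A)) * Q
      = (1/2) \<cdot>\<^sub>m (Q * A + Q * transpose_mat A) * Q" by simp
  also have "\<dots> = (1/2) \<cdot>\<^sub>m ((Q * A + Q * transpose_mat A) * Q)"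
    by (rule mult_smult_assoc_mat) (use A Q in auto)
  also have "(Q * A + Q * transpose_mat A) * Q = Q * A * Q + Q * transpose_mat A * Q"
    by (rule add_mult_distrib_mat) (use A Q in auto)
  finally show ?thesis
    unfolding tangent_proj_def by (intro eq_matI) (use A Q in \<open>auto simp: algebra_simps\<close>)
qed

section \<open>The operator norm of a diagonal matrix\<close>

lemma mat_diag_mult_vec_index:
  assumes "v \<in> carrier_vec n" and "j < n"
  shows "(mat_diag n d *\<^sub>v v) $ j = d j * v $ j"
proof -
  have "(mat_diag n d *\<^sub>v v) $ j = (\<Sum>l<n. (if j = l then d l else 0) * v $ l)"
    using assms by (simp add: mat_diag_def scalar_prod_def row_def atLeast0LessThan)
  also have "\<dots> = (\<Sum>l<n. if j = l then d l * v $ l else 0)"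
    by (rule sum.cong) auto
  also have "\<dots> = d j * v $ j"
    using assms by simp
  finally show ?thesis .
qed

lemma vnorm_mat_diag_mult_le:
  assumes "v \<in> carrier_vec n" and "vnorm v \<le> 1"
  shows "vnorm (mat_diag n d *\<^sub>v v) \<le> sqrt (\<Sum>j<n. (d j)\<^sup>2)"
proof -
  have v_sq: "(\<Sum>j<n. (v $ j)\<^sup>2) \<le> 1"
    using assms unfolding vnorm_def by (simp add: real_sqrt_le_1_iff)
  have "(\<Sum>j<n. ((mat_diag n d *\<^sub>v v) $ j)\<^sup>2) = (\<Sum>j<n. (d j * v $ j)\<^sup>2)"
    using assms(1) by (intro sum.cong) (auto simp: mat_diag_mult_vec_index)
  also have "\<dots> \<le> (\<Sum>j<n. (d j)\<^sup>2)"
  proof (rule sum_mono)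
    fix j assume "j \<in> {..<n}"
    then have "(v $ j)\<^sup>2 \<le> (\<Sum>j<n. (v $ j)\<^sup>2)"
      by (intro member_le_sum) auto
    then show "(d j * v $ j)\<^sup>2 \<le> (d j)\<^sup>2"
      using v_sq by (simp add: power_mult_distrib mult_left_le)
  qed
  moreover have "dim_vec (mat_diag n d *\<^sub>v v) = n"
    by (simp add: mat_diag_def)
  ultimately show ?thesis
    unfolding vnorm_def by (simp only:) (rule real_sqrt_le_mono)
qed

lemma abs_le_op_norm_mat_diag:
  assumes "i < n"
  shows "\<bar>d i\<bar> \<le> op_norm (mat_diag n d)"
proof -
  let ?V = "{vnorm (mat_diag n d *\<^sub>v v) | v. v \<in> carrier_vec (dim_col (mat_diag n d)) \<and> vnorm v \<le> 1}"
  have dim: "dim_col (mat_diag n d) = n"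
    by (simp add: mat_diag_def)
  have "bdd_above ?V"
    using vnorm_mat_diag_mult_le unfolding dim
    by (intro bdd_aboveI[where M = "sqrt (\<Sum>j<n. (d j)\<^sup>2)"]) auto
  moreover have "\<bar>d i\<bar> \<in> ?V"
  proof -
    let ?u = "unit_vec n i :: real vec"
    have "(\<Sum>j<n. (?u $ j)\<^sup>2) = (\<Sum>j<n. if j = i then 1 else 0)"
      by (rule sum.cong) (auto simp: unit_vec_def)
    then have "vnorm ?u = 1"
      unfolding vnorm_def using assms by simp
    moreover have "(\<Sum>j<n. ((mat_diag n d *\<^sub>v ?u) $ j)\<^sup>2) = (\<Sum>j<n. if j = i then (d i)\<^sup>2 else 0)"
      by (rule sum.cong) (auto simp: mat_diag_mult_vec_index unit_vec_def)
    then have sq: "(\<Sum>j<n. ((mat_diag n d *\<^sub>v ?u) $ j)\<^sup>2) = (d i)\<^sup>2"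
      using assms by simp
    have "dim_vec (mat_diag n d *\<^sub>v ?u) = n"
      by (simp add: mat_diag_def)
    then have "vnorm (mat_diag n d *\<^sub>v ?u) = \<bar>d i\<bar>"
      unfolding vnorm_def by (simp only: sq real_sqrt_abs)
    ultimately show ?thesis
      unfolding dim by (intro CollectI exI[of _ ?u]) simp
  qed
  ultimately show ?thesis
    unfolding op_norm_def by (rule cSup_upper[rotated])
qed

section \<open>The scalar inequality\<close>

lemma sorted_threshold_abs:
  fixes lam :: "nat \<Rightarrow> real"
  assumes sorted: "\<forall>i j. i \<le> j \<longrightarrow> j < n \<longrightarrow> lam j \<le> lam i"
    and k: "1 \<le> k" "k \<le> n" and i: "i < n"
  shows "(lam i - lam (k - 1)) * (if i < k then 1 else -1) = \<bar>lam i - lam (k - 1)\<bar>"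
proof (cases "i < k")
  case True
  then have "lam (k - 1) \<le> lam i" using sorted k by auto
  then show ?thesis using True by simp
next
  case False
  then have "lam i \<le> lam (k - 1)" using sorted k i by auto
  then show ?thesis using False by simp
qed

lemma sum_gap_shift:
  fixes lam e p :: "nat \<Rightarrow> real"
  assumes trace: "(\<Sum>i<n. p i) = (\<Sum>i<n. e i)" and sign: "\<And>i. e i * e i = 1"
  shows "(\<Sum>i<n. lam i * (e i - p i)) = (\<Sum>i<n. (lam i - c) * e i * (1 - e i * p i))"
proof -
  have "(\<Sum>i<n. lam i * (e i - p i))
      = (\<Sum>i<n. (lam i - c) * (e i - p i)) + c * ((\<Sum>i<n. e i) - (\<Sum>i<n. p i))"
    by (simp add: algebra_simps sum.distrib sum_subtractf sum_distrib_left)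
  also have "\<dots> = (\<Sum>i<n. (lam i - c) * (e i - p i))"
    using trace by simp
  also have "\<dots> = (\<Sum>i<n. (lam i - c) * e i * (1 - e i * p i))"
  proof (rule sum.cong[OF refl])
    fix i
    have "e i * (1 - e i * p i) = e i - (e i * e i) * p i"
      by (simp add: algebra_simps)
    then show "(lam i - c) * (e i - p i) = (lam i - c) * e i * (1 - e i * p i)"
      using sign[of i] by simp
  qed
  finally show ?thesis .
qed

lemma sum_sq_commutator_le:
  fixes lam :: "nat \<Rightarrow> real" and p :: "nat \<Rightarrow> nat \<Rightarrow> real"
  assumes rows: "\<And>i. i < n \<Longrightarrow> (\<Sum>j<n. (p i j)\<^sup>2) = 1"
    and cols: "\<And>j. j < n \<Longrightarrow> (\<Sum>i<n. (p i j)\<^sup>2) = 1"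
    and bound: "\<And>i. i < n \<Longrightarrow> \<bar>lam i\<bar> \<le> L"
  shows "(\<Sum>i<n. \<Sum>j<n. ((lam i - lam j) * p i j)\<^sup>2) \<le> 4 * L * (\<Sum>i<n. \<bar>lam i - c\<bar> * (1 - (p i i)\<^sup>2))"
proof -
  define \<kappa> where "\<kappa> i = \<bar>lam i - c\<bar>" for i
  define q where "q i j = (if i = j then 0 else (p i j)\<^sup>2)" for i j
  have q_rows: "(\<Sum>j<n. q i j) = 1 - (p i i)\<^sup>2" if "i < n" for i
  proof -
    have "(\<Sum>j<n. q i j) = (\<Sum>j<n. (p i j)\<^sup>2 - (if i = j then (p i j)\<^sup>2 else 0))"
      by (rule sum.cong) (auto simp: q_def)
    then show ?thesis
      using rows[OF that] that by (simp add: sum_subtractf)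
  qed
  have q_cols: "(\<Sum>i<n. q i j) = 1 - (p j j)\<^sup>2" if "j < n" for j
  proof -
    have "(\<Sum>i<n. q i j) = (\<Sum>i<n. (p i j)\<^sup>2 - (if i = j then (p i j)\<^sup>2 else 0))"
      by (rule sum.cong) (auto simp: q_def)
    then show ?thesis
      using cols[OF that] that by (simp add: sum_subtractf)
  qed
  have term_le: "((lam i - lam j) * p i j)\<^sup>2 \<le> 2 * L * (\<kappa> i + \<kappa> j) * q i j"
    if "i < n" and "j < n" for i j
  proof (cases "i = j")
    case True
    then show ?thesis by (simp add: q_def)
  next
    case False
    have diff_le_bound: "\<bar>lam i - lam j\<bar> \<le> 2 * L"
      using bound[OF that(1)] bound[OF that(2)] by linarith
    have diff_le_\<kappa>: "\<bar>lam i - lam j\<bar> \<le> \<kappa> i + \<kappa> j"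
      unfolding \<kappa>_def by linarith
    have "(lam i - lam j)\<^sup>2 = \<bar>lam i - lam j\<bar> * \<bar>lam i - lam j\<bar>"
      by (simp add: power2_eq_square)
    also have "\<dots> \<le> (2 * L) * (\<kappa> i + \<kappa> j)"
      by (rule mult_mono[OF diff_le_bound diff_le_\<kappa>]) (use bound[OF that(1)] in auto)
    finally show ?thesis
      using False by (simp add: q_def power_mult_distrib mult_right_mono)
  qed
  have "(\<Sum>i<n. \<Sum>j<n. ((lam i - lam j) * p i j)\<^sup>2) \<le> (\<Sum>i<n. \<Sum>j<n. 2 * L * (\<kappa> i + \<kappa> j) * q i j)"
    by (intro sum_mono) (use term_le in auto)
  also have "\<dots> = 2 * L * (\<Sum>i<n. \<Sum>j<n. \<kappa> i * q i j) + 2 * L * (\<Sum>i<n. \<Sum>j<n. \<kappa> j * q i j)"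
    by (simp add: algebra_simps sum.distrib sum_distrib_left)
  also have "(\<Sum>i<n. \<Sum>j<n. \<kappa> i * q i j) = (\<Sum>i<n. \<kappa> i * (1 - (p i i)\<^sup>2))"
    using q_rows by (simp add: flip: sum_distrib_left)
  also have "(\<Sum>i<n. \<Sum>j<n. \<kappa> j * q i j) = (\<Sum>j<n. \<kappa> j * (1 - (p j j)\<^sup>2))"
    using q_cols by (subst sum.swap) (simp add: flip: sum_distrib_left)
  finally show ?thesis
    by (simp add: \<kappa>_def)
qed

lemma sorted_spectral_gap:
  fixes lam e :: "nat \<Rightarrow> real" and p :: "nat \<Rightarrow> nat \<Rightarrow> real"
  assumes sorted: "\<forall>i j. i \<le> j \<longrightarrow> j < n \<longrightarrow> lam j \<le> lam i"
    and k: "1 \<le> k" "k \<le> n" and e: "\<And>i. e i = (if i < k then 1 else -1)"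
    and rows: "\<And>i. i < n \<Longrightarrow> (\<Sum>j<n. (p i j)\<^sup>2) = 1"
    and cols: "\<And>j. j < n \<Longrightarrow> (\<Sum>i<n. (p i j)\<^sup>2) = 1"
    and trace: "(\<Sum>i<n. p i i) = 2 * real k - real n"
    and bound: "\<And>i. i < n \<Longrightarrow> \<bar>lam i\<bar> \<le> L"
  shows "0 \<le> (\<Sum>i<n. lam i * (e i - p i i))"
    and "(\<Sum>i<n. \<Sum>j<n. ((lam i - lam j) * p i j)\<^sup>2) \<le> 8 * L * (\<Sum>i<n. lam i * (e i - p i i))"
proof -
  \<comment> \<open>the \<open>k\<close>-th largest eigenvalue (indices start at 0)\<close>
  define c where "c = lam (k - 1)"
  have sign: "e i * e i = 1" for i by (simp add: e)
  have "(\<Sum>i<n. p i i) = (\<Sum>i<n. e i)"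
    using trace sum_signs[OF k(2)] by (simp add: e)
  then have "(\<Sum>i<n. lam i * (e i - p i i)) = (\<Sum>i<n. (lam i - c) * e i * (1 - e i * p i i))"
    using sum_gap_shift[where p = "\<lambda>i. p i i" and c = c] sign by blast
  also have "\<dots> = (\<Sum>i<n. \<bar>lam i - c\<bar> * (1 - e i * p i i))"
    using sorted_threshold_abs[OF sorted k] by (intro sum.cong) (auto simp: c_def e)
  finally have gap: "(\<Sum>i<n. lam i * (e i - p i i)) = (\<Sum>i<n. \<bar>lam i - c\<bar> * (1 - e i * p i i))" .
  have diag_le_1: "\<bar>p i i\<bar> \<le> 1" if "i < n" for i
  proof -
    have "(p i i)\<^sup>2 \<le> (\<Sum>j<n. (p i j)\<^sup>2)"
      by (rule member_le_sum[where f = "\<lambda>j. (p i j)\<^sup>2"]) (use that in auto)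
    then show ?thesis
      using rows[OF that] by (simp add: abs_square_le_1)
  qed
  have slack_nonneg: "0 \<le> 1 - e i * p i i" if "i < n" for i
    using diag_le_1[OF that] by (auto simp: e abs_le_iff)
  have slack_sq: "1 - (p i i)\<^sup>2 \<le> 2 * (1 - e i * p i i)" for i
  proof -
    have "0 \<le> (e i - p i i)\<^sup>2" by simp
    then show ?thesis
      using sign[of i] by (simp add: power2_eq_square algebra_simps)
  qed
  show "0 \<le> (\<Sum>i<n. lam i * (e i - p i i))"
    unfolding gap
  proof (rule sum_nonneg)
    fix i assume "i \<in> {..<n}"
    then show "0 \<le> \<bar>lam i - c\<bar> * (1 - e i * p i i)"
      using slack_nonneg[of i] by simp
  qed
  have "(\<Sum>i<n. \<Sum>j<n. ((lam i - lam j) * p i j)\<^sup>2) \<le> 4 * L * (\<Sum>i<n. \<bar>lam i - c\<bar> * (1 - (p i i)\<^sup>2))"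
    using sum_sq_commutator_le[OF rows cols bound] .
  also have "\<dots> \<le> 4 * L * (\<Sum>i<n. \<bar>lam i - c\<bar> * (2 * (1 - e i * p i i)))"
  proof (cases "n = 0")
    case False
    then have "0 \<le> 4 * L"
      using bound[of 0] by linarith
    moreover have "(\<Sum>i<n. \<bar>lam i - c\<bar> * (1 - (p i i)\<^sup>2)) \<le> (\<Sum>i<n. \<bar>lam i - c\<bar> * (2 * (1 - e i * p i i)))"
      by (rule sum_mono, rule mult_left_mono[OF slack_sq abs_ge_zero])
    ultimately show ?thesis
      by (rule mult_left_mono[rotated])
  qed simp
  also have "\<dots> = 8 * L * (\<Sum>i<n. lam i * (e i - p i i))"
    unfolding gap by (simp add: sum_distrib_left algebra_simps)
  finally show "(\<Sum>i<n. \<Sum>j<n. ((lam i - lam j) * p i j)\<^sup>2) \<le> 8 * L * (\<Sum>i<n. lam i * (e i - p i i))" .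
qed

section \<open>Spectral coordinates\<close>

lemma frob_norm_orth_conj:
  assumes "U \<in> orth_group n" and "M \<in> carrier_mat n n"
  shows "frob_norm (U * M * transpose_mat U) = frob_norm M"
  using frob_norm_mult_orth[OF transpose_orth_group[OF assms(1)], of "U * M" n]
    frob_norm_orth_mult[OF assms] orth_groupD(1)[OF assms(1)] assms(2) by simp

lemma frob_norm_tangent_proj:
  assumes Q: "Q \<in> orth_group n" and QT: "transpose_mat Q = Q" and M: "M \<in> carrier_mat n n"
  shows "frob_norm (tangent_proj Q M) = (1/2) * frob_norm (M * Q - Q * M)"
proof -
  have Qc: "Q \<in> carrier_mat n n" and QQ: "Q * Q = 1\<^sub>m n"
    using orth_groupD(1,2)[OF Q] QT by auto
  have "tangent_proj Q M * Q = (1/2) \<cdot>\<^sub>m ((M - Q * M * Q) * Q)"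
    unfolding tangent_proj_def by (rule mult_smult_assoc_mat) (use Qc M in auto)
  also have "(M - Q * M * Q) * Q = M * Q - Q * M"
    using diff_conj_involution_mult[OF Qc QQ M] .
  finally have "frob_norm (tangent_proj Q M * Q) = (1/2) * frob_norm (M * Q - Q * M)"
    by (simp add: frob_norm_smult)
  moreover have "frob_norm (tangent_proj Q M * Q) = frob_norm (tangent_proj Q M)"
    using Qc M minus_carrier_mat[of "Q * M * Q" n n M]
    by (intro frob_norm_mult_orth[OF Q, of "tangent_proj Q M" n]) (simp add: tangent_proj_def)
  ultimately show ?thesis by simp
qed

lemma frob_norm_sq_commutator_diag:
  assumes "P \<in> carrier_mat n n"
  shows "(frob_norm (mat_diag n lam * P - P * mat_diag n lam))\<^sup>2
    = (\<Sum>i<n. \<Sum>j<n. ((lam i - lam j) * P $$ (i, j))\<^sup>2)"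
proof -
  have "mat_diag n lam * P - P * mat_diag n lam = mat n n (\<lambda>(i, j). (lam i - lam j) * P $$ (i, j))"
    unfolding mat_diag_mult_left[OF assms] mat_diag_mult_right[OF assms]
    by (rule eq_matI) (auto simp: algebra_simps)
  then show ?thesis
    unfolding frob_norm_def by (simp add: sum_nonneg)
qed

lemma mtrace_spectral_pairing:
  assumes U: "U \<in> orth_group n" and Q: "Q \<in> carrier_mat n n"
  shows "mtrace (U * mat_diag n lam * transpose_mat U * Q)
    = (\<Sum>i<n. lam i * (transpose_mat U * Q * U) $$ (i, i))"
proof -
  define P where "P = transpose_mat U * Q * U"
  have P: "P \<in> carrier_mat n n"
    using orth_groupD(1)[OF U] Q by (simp add: P_def)
  have "U * mat_diag n lam * transpose_mat U * Q
      = (U * mat_diag n lam * transpose_mat U) * (U * P * transpose_mat U)"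
    unfolding P_def orth_conj_transpose_conj[OF U Q] ..
  also have "\<dots> = U * (mat_diag n lam * P) * transpose_mat U"
    using orth_conj_mult[OF U _ P] by simp
  finally have eq: "U * mat_diag n lam * transpose_mat U * Q = U * (mat_diag n lam * P) * transpose_mat U" .
  have "mtrace (U * mat_diag n lam * transpose_mat U * Q) = mtrace (mat_diag n lam * P)"
    unfolding eq by (rule mtrace_orth_conj[OF U]) (rule mult_carrier_mat[OF mat_diag_dim P])
  also have "\<dots> = (\<Sum>i<n. lam i * P $$ (i, i))"
    by (rule mtrace_mat_diag_mult[OF P])
  finally show ?thesis
    unfolding P_def .
qed

lemma frob_norm_sq_tangent_proj_spectral:
  assumes U: "U \<in> orth_group n" and Q: "Q \<in> orth_group n" and QT: "transpose_mat Q = Q"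
  shows "(frob_norm (tangent_proj Q (U * mat_diag n lam * transpose_mat U)))\<^sup>2
    = (1/4) * (\<Sum>i<n. \<Sum>j<n. ((lam i - lam j) * (transpose_mat U * Q * U) $$ (i, j))\<^sup>2)"
proof -
  define P where "P = transpose_mat U * Q * U"
  define L where "L = mat_diag n lam"
  have Qc: "Q \<in> carrier_mat n n" using orth_groupD(1)[OF Q] .
  have P: "P \<in> carrier_mat n n" and L: "L \<in> carrier_mat n n"
    using orth_groupD(1)[OF U] Qc by (simp_all add: P_def L_def)
  have QP: "Q = U * P * transpose_mat U"
    unfolding P_def orth_conj_transpose_conj[OF U Qc] ..
  have "(U * L * transpose_mat U) * Q - Q * (U * L * transpose_mat U)
      = U * (L * P) * transpose_mat U - U * (P * L) * transpose_mat U"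
    unfolding QP orth_conj_mult[OF U L P] orth_conj_mult[OF U P L] ..
  also have "\<dots> = U * (L * P - P * L) * transpose_mat U"
    using conj_diff_distrib[of U n "L * P" "P * L"] orth_groupD(1)[OF U] L P by simp
  finally have comm: "(U * L * transpose_mat U) * Q - Q * (U * L * transpose_mat U)
      = U * (L * P - P * L) * transpose_mat U" .
  have LP: "L * P - P * L \<in> carrier_mat n n"
    using minus_carrier_mat[of "P * L" n n "L * P"] L P by simp
  have "frob_norm (tangent_proj Q (U * L * transpose_mat U))
      = (1/2) * frob_norm ((U * L * transpose_mat U) * Q - Q * (U * L * transpose_mat U))"
    by (rule frob_norm_tangent_proj[OF Q QT]) (use orth_groupD(1)[OF U] L in simp)
  also have "\<dots> = (1/2) * frob_norm (L * P - P * L)"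
    unfolding comm frob_norm_orth_conj[OF U LP] ..
  finally have F: "frob_norm (tangent_proj Q (U * L * transpose_mat U)) = (1/2) * frob_norm (L * P - P * L)" .
  have "(frob_norm (tangent_proj Q (U * L * transpose_mat U)))\<^sup>2
      = (1/4) * (frob_norm (L * P - P * L))\<^sup>2"
    unfolding F by (simp add: power_divide)
  then show ?thesis
    unfolding frob_norm_sq_commutator_diag[OF P, of lam, folded L_def] by (simp add: L_def P_def)
qed

lemma grassmann_spectral_gap:
  assumes U: "U \<in> orth_group n" and sorted: "\<forall>i j. i \<le> j \<longrightarrow> j < n \<longrightarrow> lam j \<le> lam i"
    and k: "1 \<le> k" "k \<le> n" and Q: "Q \<in> grassmann k n"
  defines "S \<equiv> U * mat_diag n lam * transpose_mat U" and "Qs \<equiv> U * Ikn k n * transpose_mat U"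
  shows "mtrace (S * Q) \<le> mtrace (S * Qs)"
    and "(frob_norm (tangent_proj Q S))\<^sup>2 \<le> 2 * op_norm (mat_diag n lam) * (mtrace (S * Qs) - mtrace (S * Q))"
proof -
  define P where "P = transpose_mat U * Q * U"
  define e where "e i = (if i < k then 1 else -1 :: real)" for i
  have P: "P \<in> grassmann k n"
    using orth_conj_grassmann[OF transpose_orth_group[OF U] Q] by (simp add: P_def)
  have Pc: "P \<in> carrier_mat n n" using grassmannD(2)[OF P] .
  have Ikn: "Ikn k n \<in> carrier_mat n n"
    using grassmannD(2)[OF Ikn_grassmann[OF k(2)]] .
  have "transpose_mat U * Qs * U = Ikn k n"
    using orth_conj_transpose_conj[OF transpose_orth_group[OF U] Ikn]
    unfolding Qs_def by (simp only: transpose_transpose)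
  then have "mtrace (S * Qs) = (\<Sum>i<n. lam i * Ikn k n $$ (i, i))"
    using mtrace_spectral_pairing[OF U grassmannD(2)[OF orth_conj_grassmann[OF U Ikn_grassmann[OF k(2)]]]]
    by (simp add: S_def Qs_def)
  also have "\<dots> = (\<Sum>i<n. lam i * e i)"
    by (intro sum.cong) (auto simp: Ikn_def mat_diag_def e_def)
  finally have "mtrace (S * Qs) = (\<Sum>i<n. lam i * e i)" .
  moreover have "mtrace (S * Q) = (\<Sum>i<n. lam i * P $$ (i, i))"
    using mtrace_spectral_pairing[OF U grassmannD(2)[OF Q]] by (simp add: S_def P_def)
  ultimately have gap: "mtrace (S * Qs) - mtrace (S * Q) = (\<Sum>i<n. lam i * (e i - P $$ (i, i)))"
    by (simp add: sum_subtractf algebra_simps)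
  have trace: "(\<Sum>i<n. P $$ (i, i)) = 2 * real k - real n"
    using grassmannD(5)[OF P] Pc unfolding mtrace_def by simp
  note bound = sorted_spectral_gap[OF sorted k e_def
      orth_group_rows_sq[OF grassmannD(1)[OF P]] orth_group_cols_sq[OF grassmannD(1)[OF P]]
      trace abs_le_op_norm_mat_diag[of _ n lam]]
  show "mtrace (S * Q) \<le> mtrace (S * Qs)"
    using bound(1) gap by simp
  have "(frob_norm (tangent_proj Q S))\<^sup>2 = (1/4) * (\<Sum>i<n. \<Sum>j<n. ((lam i - lam j) * P $$ (i, j))\<^sup>2)"
    unfolding S_def P_def using frob_norm_sq_tangent_proj_spectral[OF U grassmannD(1,3)[OF Q]] .
  then show "(frob_norm (tangent_proj Q S))\<^sup>2 \<le> 2 * op_norm (mat_diag n lam) * (mtrace (S * Qs) - mtrace (S * Q))"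
    using bound(2) gap by simp
qed

theorem lemma6p1:
  fixes k n :: nat and A :: "real mat" and f :: "real mat \<Rightarrow> real"
  assumes "1 \<le> k" and "k \<le> n" and "A \<in> carrier_mat n n"
    and "f = (\<lambda>Q. mtrace (transpose_mat A * Q))"
  shows "(\<forall>Q \<in> grassmann k n.
            riem_grad n f Q = (1/4) \<cdot>\<^sub>m (A + transpose_mat A - Q * A * Q - Q * transpose_mat A * Q))
       \<and> (\<forall>U lam. U \<in> orth_group n \<longrightarrow>
            (\<forall>i j. i \<le> j \<longrightarrow> j < n \<longrightarrow> lam j \<le> lam i) \<longrightarrow>
            (1/2) \<cdot>\<^sub>m (A + transpose_mat A) = U * mat_diag n lam * transpose_mat U \<longrightarrow>
            (let Qs = U * Ikn k n * transpose_mat U in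
               Qs \<in> grassmann k n \<and> (\<forall>Q \<in> grassmann k n. f Q \<le> f Qs) \<and>
               (\<forall>Q \<in> grassmann k n.
                  2 * op_norm (mat_diag n lam) * (f Qs - f Q) \<ge> (frob_norm (riem_grad n f Q))\<^sup>2)))"
proof -
  define S where "S = (1/2) \<cdot>\<^sub>m (A + transpose_mat A)"
  have grad: "riem_grad n f Q = tangent_proj Q S" if "Q \<in> grassmann k n" for Q
    unfolding assms(4) S_def using riem_grad_mtrace[OF assms(3) grassmannD(2,3,4)[OF that]] .
  have f_sym: "f Q = mtrace (S * Q)" if "Q \<in> grassmann k n" for Q
    unfolding assms(4) S_def using mtrace_transpose_mult_sym[OF assms(3) grassmannD(2,3)[OF that]] .
  show ?thesis
  proof (intro conjI ballI allI impI)
    fix Q assume Q: "Q \<in> grassmann k n"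
    show "riem_grad n f Q = (1/4) \<cdot>\<^sub>m (A + transpose_mat A - Q * A * Q - Q * transpose_mat A * Q)"
      unfolding grad[OF Q] S_def using tangent_proj_sym_part[OF assms(3) grassmannD(2)[OF Q]] .
  next
    fix U lam assume U: "U \<in> orth_group n" and sorted: "\<forall>i j. i \<le> j \<longrightarrow> j < n \<longrightarrow> lam j \<le> lam i"
      and eig: "(1/2) \<cdot>\<^sub>m (A + transpose_mat A) = U * mat_diag n lam * transpose_mat U"
    have Qs: "U * Ikn k n * transpose_mat U \<in> grassmann k n"
      using orth_conj_grassmann[OF U Ikn_grassmann[OF assms(2)]] .
    note gap = grassmann_spectral_gap[OF U sorted assms(1,2), folded eig S_def]
    show "let Qs = U * Ikn k n * transpose_mat U in
        Qs \<in> grassmann k n \<and> (\<forall>Q \<in> grassmann k n. f Q \<le> f Qs) \<and>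
        (\<forall>Q \<in> grassmann k n. 2 * op_norm (mat_diag n lam) * (f Qs - f Q) \<ge> (frob_norm (riem_grad n f Q))\<^sup>2)"
      unfolding Let_def using Qs gap f_sym[OF Qs] f_sym grad by simp
  qed
qed

end
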